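(* Let $\sigma$ be a completely erasing $k$-block substitution with $w_\epsilon\ne1^k$ that satisfies the optimality condition. Suppose the vanishing order satisfies $$\lim_{|w|\to\infty}\frac{|w|}{\epsilon(w)}=\infty,$$ meaning that for every $M>0$ there is $N$ such that $|w|/\epsilon(w)>M$ for all $w\in\{0,1\}^*$ with $|w|>N$. Then $f_\sigma$ has infinite topological entropy.
   Context: Notation: $\mathbb I=[0,1]$. $\{0,1\}^*$ and $\{0,1\}^\omega$ denote finite and infinite binary words, and $\epsilon$ is the empty word. For a word $w$, set $0.w=\sum_iw_i2^{-i}$. For $x\in(0,1]$, $\widetilde x$ is the unique infinite binary expansion of $x$ not ending in $0^\infty$. Fix $k\ge2$. An erasing $k$-block substitution is a map $\sigma:\{0,1\}^k\to\{0,1\}^*$ with exactly one block $w_\epsilon$ such that $\sigma(w_\epsilon)=\epsilon$. $\sigma$ is alternating if there are $\sigma_1,\dots,\sigma_k:\{0,1\}\to\{0,1\}^*$ with $\sigma(b_1\cdots b_k)=\sigma_1(b_1)\cdots\sigma_k(b_k)$. It is then extended to all finite or infinite words by $\sigma(u)=\prod_j\sigma_{((j-1)\bmod k)+1}(u_j)$. $\sigma$ is completely erasing if it is erasing and alternating, and every $w\in\{0,1\}^*$ satisfies $\sigma^n(w)=\epsilon$ for some $n\in\mathbb N$. The least such $n$ is the vanishing order $\epsilon(w)$. The map $f_\sigma:\mathbb I\to\mathbb I$ is defined by $f_\sigma(x)=0.\sigma(\widetilde x)$ if $x\in(0,1]$ and $\widetilde x\neq w_\epsilon^\infty$, and $f_\sigma(x)=0$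 otherwise. Optimality condition: every $w\in\{0,1\}^\omega$ can be written as $w=\prod_{i\ge1}\sigma(b_i)$ with blocks $b_i\in\{0,1\}^k$ satisfying $\sigma(b_i)\ne\epsilon$. Topological entropy (Bowen–Dinaburg, for a possibly discontinuous $f$): let $d_n(x,y)=\max_{0\le i\le n}|f^i(x)-f^i(y)|$. A set $S$ is $(n,\delta)$-separated if $d_n(x,y)\ge\delta$ for all distinct $x,y\in S$. Let $s(n,\delta)$ be the maximal cardinality of an $(n,\delta)$-separated subset of $\mathbb I$. Then $h(f)=\lim_{\delta\to0}\limsup_{n\to\infty}\frac1n\log s(n,\delta)$. *)

theory Defs
  imports "HOL-Analysis.Analysis"
begin

text \<open>Binary words: finite words are bool lists (True = 1, False = 0),
infinite words are functions nat => bool (position n is the (n+1)-th letter).\<close>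

definition bval :: "bool list \<Rightarrow> real" where
  "bval w = (\<Sum>i<length w. (if w ! i then 1 else 0) / 2 ^ (Suc i))"

definition ival :: "(nat \<Rightarrow> bool) \<Rightarrow> real" where
  "ival w = (\<Sum>n. (if w n then 1 else 0) / 2 ^ (Suc n))"

definition tilde :: "real \<Rightarrow> (nat \<Rightarrow> bool)" where
  "tilde x = (THE w. ival w = x \<and> (\<forall>N. \<exists>n\<ge>N. w n))"

text \<open>Concatenation of an infinite sequence of finite words; if the result
is a finite word it is padded with zeros (which does not change its binary value).\<close>
definition iconcat :: "(nat \<Rightarrow> bool list) \<Rightarrow> nat \<Rightarrow> bool" where
  "iconcat u n =
     (if \<exists>m. n < length (concat (map u [0..<m]))
      then concat (map u [0..<(LEAST m. n < length (concat (map u [0..<m])))]) ! n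
      else False)"

text \<open>An alternating k-block substitution is given by its components
s 0, ..., s (k-1) (the paper's sigma_1, ..., sigma_k).  Its extension to finite words:\<close>
definition sub :: "(nat \<Rightarrow> bool \<Rightarrow> bool list) \<Rightarrow> nat \<Rightarrow> bool list \<Rightarrow> bool list" where
  "sub s k w = concat (map (\<lambda>j. s (j mod k) (w ! j)) [0..<length w])"

definition isub :: "(nat \<Rightarrow> bool \<Rightarrow> bool list) \<Rightarrow> nat \<Rightarrow> (nat \<Rightarrow> bool) \<Rightarrow> (nat \<Rightarrow> bool)" where
  "isub s k x = iconcat (\<lambda>j. s (j mod k) (x j))"

definition erasing :: "(nat \<Rightarrow> bool \<Rightarrow> bool list) \<Rightarrow> nat \<Rightarrow> bool" where
  "erasing s k \<longleftrightarrow> (\<exists>!b. length b = k \<and> sub s k b = [])"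

definition eblock :: "(nat \<Rightarrow> bool \<Rightarrow> bool list) \<Rightarrow> nat \<Rightarrow> bool list" where
  "eblock s k = (THE b. length b = k \<and> sub s k b = [])"

definition completely_erasing :: "(nat \<Rightarrow> bool \<Rightarrow> bool list) \<Rightarrow> nat \<Rightarrow> bool" where
  "completely_erasing s k \<longleftrightarrow> erasing s k \<and> (\<forall>w. \<exists>n. (sub s k ^^ n) w = [])"

definition vanishing_order :: "(nat \<Rightarrow> bool \<Rightarrow> bool list) \<Rightarrow> nat \<Rightarrow> bool list \<Rightarrow> nat" where
  "vanishing_order s k w = (LEAST n. (sub s k ^^ n) w = [])"

definition optimal :: "(nat \<Rightarrow> bool \<Rightarrow> bool list) \<Rightarrow> nat \<Rightarrow> bool" where
  "optimal s k \<longleftrightarrow>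
     (\<forall>w :: nat \<Rightarrow> bool. \<exists>b :: nat \<Rightarrow> bool list.
        (\<forall>i. length (b i) = k \<and> sub s k (b i) \<noteq> []) \<and>
        w = iconcat (\<lambda>i. sub s k (b i)))"

definition fsigma :: "(nat \<Rightarrow> bool \<Rightarrow> bool list) \<Rightarrow> nat \<Rightarrow> real \<Rightarrow> real" where
  "fsigma s k x =
     (if 0 < x \<and> x \<le> 1 \<and> tilde x \<noteq> (\<lambda>n. eblock s k ! (n mod k))
      then ival (isub s k (tilde x)) else 0)"

text \<open>Bowen--Dinaburg topological entropy of a (possibly discontinuous) map on [0,1].\<close>
definition dn :: "(real \<Rightarrow> real) \<Rightarrow> nat \<Rightarrow> real \<Rightarrow> real \<Rightarrow> real" where
  "dn f n x y = Max ((\<lambda>i. \<bar>(f ^^ i) x - (f ^^ i) y\<bar>) ` {0..n})"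

definition separated :: "(real \<Rightarrow> real) \<Rightarrow> nat \<Rightarrow> real \<Rightarrow> real set \<Rightarrow> bool" where
  "separated f n \<delta> S \<longleftrightarrow> S \<subseteq> {0..1} \<and> (\<forall>x\<in>S. \<forall>y\<in>S. x \<noteq> y \<longrightarrow> dn f n x y \<ge> \<delta>)"

definition sep_num :: "(real \<Rightarrow> real) \<Rightarrow> nat \<Rightarrow> real \<Rightarrow> nat" where
  "sep_num f n \<delta> = Sup {card S | S. finite S \<and> separated f n \<delta> S}"

definition htop :: "(real \<Rightarrow> real) \<Rightarrow> ereal" where
  "htop f = Lim (at_right 0)
     (\<lambda>\<delta>. limsup (\<lambda>n. ereal (ln (real (sep_num f n \<delta>)) / real n)))"

end

theory Submission
  imports Defs
begin

text \<open>If no expansion along the substitution orbit of x is eventually periodic, each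
has infinitely many ones, hence is the canonical expansion of its value, and fsigma acts on
these values exactly as the substitution acts on the expansions. By optimality every word
that is not eventually periodic is the image of another such word (at any phase), so a
finite word w that vanishes after m steps can be prepended to a tail whose m-th image is any
prescribed word. The growth hypothesis lets all words of length p + 1 vanish within m
\<approx> (p + 1) / M steps; iterating the construction prescribes the first p + 1 digits of
the orbit at the times 0, m, ..., (r - 1) m independently. Using words of length p followed
by a zero gives 2^(p r) points that are (r m, 2^-(p+1))-separated, so the entropy is at
least p ln 2 / m \<approx> M ln 2, for every M.\<close>

section \<open>Binary values\<close>

definition digit_val :: "(nat \<Rightarrow> bool) \<Rightarrow> nat \<Rightarrow> real" where
  "digit_val x n = (if x n then 1 else 0) / 2 ^ Suc n"

definition tail_val :: "(nat \<Rightarrow> bool) \<Rightarrow> nat \<Rightarrow> real" where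
  "tail_val x j = (\<Sum>n. digit_val x (n + j))"

lemma digit_val_nonneg: "0 \<le> digit_val x n"
  by (simp add: digit_val_def)

lemma digit_val_le: "digit_val x n \<le> (1/2) ^ Suc n"
  by (simp add: digit_val_def power_divide)

lemma half_powers_from:
  "(\<lambda>n. ((1::real)/2) ^ Suc (n + j)) sums (1 / 2 ^ j)"
proof -
  have "(\<lambda>n. ((1::real)/2) ^ Suc (n + j)) = (\<lambda>n. (1/2) ^ Suc j * (1/2) ^ n)"
    by (simp add: power_add mult.commute)
  moreover have "(1/2::real) ^ Suc j * (1 / (1 - 1/2)) = 1 / 2 ^ j"
    by (simp add: power_divide)
  moreover have "(\<lambda>n. (1/2) ^ Suc j * ((1::real)/2) ^ n) sums ((1/2) ^ Suc j * (1 / (1 - 1/2)))"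
    by (rule sums_mult[OF geometric_sums]) simp
  ultimately show ?thesis
    by (simp only:)
qed

lemma summable_digit_val: "summable (\<lambda>n. digit_val x (n + j))"
  by (rule summable_comparison_test'[OF sums_summable[OF half_powers_from[of j]]])
     (metis digit_val_le digit_val_nonneg real_norm_def abs_of_nonneg)

lemma ival_eq_tail_val: "ival x = (\<Sum>n<j. digit_val x n) + tail_val x j"
  using suminf_split_initial_segment[OF summable_digit_val[of x 0], of j]
  by (simp add: ival_def digit_val_def tail_val_def)

lemma tail_val_Suc: "tail_val x j = digit_val x j + tail_val x (Suc j)"
  using suminf_split_head[OF summable_digit_val[of x j]] by (simp add: tail_val_def)

lemma tail_val_nonneg: "0 \<le> tail_val x j"
  unfolding tail_val_def by (rule suminf_nonneg[OF summable_digit_val]) (simp add: digit_val_nonneg)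

lemma tail_val_le: "tail_val x j \<le> 1 / 2 ^ j"
  unfolding tail_val_def sums_unique[OF half_powers_from[of j]]
  by (rule suminf_le[OF _ summable_digit_val sums_summable[OF half_powers_from]])
     (rule digit_val_le)

lemma tail_val_ge_one_digit:
  assumes "x q" "j \<le> q"
  shows "1 / 2 ^ Suc q \<le> tail_val x j"
proof -
  have "sum (\<lambda>n. digit_val x (n + j)) {q - j} \<le> tail_val x j"
    unfolding tail_val_def
    by (rule sum_le_suminf[OF summable_digit_val]) (auto simp: digit_val_nonneg)
  then show ?thesis
    using assms by (simp add: digit_val_def)
qed

lemma tail_val_le_zero_digit:
  assumes "\<not> x q" "j \<le> q"
  shows "tail_val x j \<le> 1 / 2 ^ j - 1 / 2 ^ Suc q"
proof -
  let ?g = "\<lambda>n. ((1::real)/2) ^ Suc (n + j) - digit_val x (n + j)"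
  have g_sums: "?g sums (1 / 2 ^ j - tail_val x j)"
    unfolding tail_val_def by (intro sums_diff half_powers_from summable_sums summable_digit_val)
  have "sum ?g {q - j} \<le> 1 / 2 ^ j - tail_val x j"
    by (rule sum_le_suminf[OF sums_summable[OF g_sums], unfolded sums_unique[OF g_sums, symmetric]])
       (simp, metis digit_val_le diff_ge_0_iff_ge)
  moreover have "sum ?g {q - j} = 1 / 2 ^ Suc q"
    using assms by (simp add: digit_val_def power_divide)
  ultimately show ?thesis by simp
qed

lemma ival_nonneg: "0 \<le> ival x"
  using ival_eq_tail_val[of x 0] tail_val_nonneg[of x 0] by simp

lemma ival_le_one: "ival x \<le> 1"
  using ival_eq_tail_val[of x 0] tail_val_le[of x 0] by simp

lemma ival_pos:
  assumes "\<exists>\<^sub>\<infinity>n. x n"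
  shows "0 < ival x"
proof -
  obtain q where "x q"
    using assms by (auto simp: INFM_nat_le)
  then have "1 / 2 ^ Suc q \<le> ival x"
    using ival_eq_tail_val[of x 0] tail_val_ge_one_digit[of x q 0] by simp
  then show ?thesis
    by (rule less_le_trans[rotated]) simp
qed

lemma ival_diff_at_first_difference:
  assumes "\<And>n. n < i \<Longrightarrow> x n = y n" "\<not> x i" "y i"
  shows "ival y - ival x = 1 / 2 ^ Suc i + tail_val y (Suc i) - tail_val x (Suc i)"
proof -
  have "(\<Sum>n<i. digit_val x n) = (\<Sum>n<i. digit_val y n)"
    using assms(1) by (intro sum.cong) (auto simp: digit_val_def)
  then show ?thesis
    using ival_eq_tail_val[of x i] ival_eq_tail_val[of y i] tail_val_Suc[of x i] tail_val_Suc[of y i]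
      assms(2,3) by (simp add: digit_val_def)
qed

lemma ival_less_at_first_difference:
  assumes "\<And>n. n < i \<Longrightarrow> x n = y n" "\<not> x i" "y i" "\<exists>\<^sub>\<infinity>n. y n"
  shows "ival x < ival y"
proof -
  obtain q where "Suc i \<le> q" "y q"
    using assms(4) by (auto simp: INFM_nat_le)
  then have "1 / 2 ^ Suc q \<le> tail_val y (Suc i)"
    by (rule tail_val_ge_one_digit[rotated])
  moreover have "(0::real) < 1 / 2 ^ Suc q" by simp
  moreover have "ival y - ival x = 1 / 2 ^ Suc i + tail_val y (Suc i) - tail_val x (Suc i)"
    by (rule ival_diff_at_first_difference) (use assms in auto)
  ultimately show ?thesis
    using tail_val_le[of x "Suc i"] by linarith
qed

lemma ival_gap_at_first_difference:
  assumes "\<And>n. n < i \<Longrightarrow> x n = y n" "\<not> x i" "y i" "i < q" "\<not> x q"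
  shows "1 / 2 ^ Suc q \<le> ival y - ival x"
  using ival_diff_at_first_difference[of i x y] tail_val_le_zero_digit[of x q "Suc i"]
    tail_val_nonneg[of y "Suc i"] assms by simp

lemma first_difference:
  fixes x y :: "nat \<Rightarrow> 'a"
  assumes "x \<noteq> y"
  obtains i where "\<And>n. n < i \<Longrightarrow> x n = y n" "x i \<noteq> y i"
proof
  let ?i = "LEAST i. x i \<noteq> y i"
  from assms obtain j where "x j \<noteq> y j" by auto
  then show "x ?i \<noteq> y ?i"
    by (rule LeastI)
  show "\<And>n. n < ?i \<Longrightarrow> x n = y n"
    using not_less_Least by blast
qed

lemma ival_inj:
  assumes "\<exists>\<^sub>\<infinity>n. x n" "\<exists>\<^sub>\<infinity>n. y n" "ival x = ival y"
  shows "x = y"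
proof (rule ccontr)
  assume "x \<noteq> y"
  then obtain i where "\<And>n. n < i \<Longrightarrow> x n = y n" "x i \<noteq> y i"
    using first_difference by blast
  then have "ival x < ival y \<or> ival y < ival x"
    using ival_less_at_first_difference[of i x y] ival_less_at_first_difference[of i y x] assms(1,2)
    by (metis (full_types))
  with assms(3) show False by simp
qed

lemma tilde_ival:
  assumes "\<exists>\<^sub>\<infinity>n. x n"
  shows "tilde (ival x) = x"
  unfolding tilde_def
proof (rule the_equality)
  show "ival x = ival x \<and> (\<forall>N. \<exists>n\<ge>N. x n)"
    using assms by (simp add: INFM_nat_le)
  show "w = x" if "ival w = ival x \<and> (\<forall>N. \<exists>n\<ge>N. w n)" for w
    using ival_inj[of w x] assms that by (simp add: INFM_nat_le)
qed

lemma ival_separated_by_prefix: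
  assumes "length a = p" "length a' = p" "a \<noteq> a'"
    and "\<forall>t<Suc p. x t = (a @ [False]) ! t" "\<forall>t<Suc p. x' t = (a' @ [False]) ! t"
  shows "1 / 2 ^ Suc p \<le> \<bar>ival x - ival x'\<bar>"
proof -
  have x_a: "x t = a ! t" "x' t = a' ! t" if "t < p" for t
    using assms(1,2,4,5) that by (auto simp: nth_append)
  have x_p: "\<not> x p" "\<not> x' p"
    using assms(1,2,4,5) by (auto simp: nth_append)
  have "x \<noteq> x'"
  proof
    assume "x = x'"
    then have "a = a'"
      using assms(1,2) x_a by (intro nth_equalityI) auto
    with assms(3) show False ..
  qed
  then obtain i where agree: "\<And>n. n < i \<Longrightarrow> x n = x' n" and "x i \<noteq> x' i"
    using first_difference by blast
  moreover have "i < p"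
  proof (rule ccontr)
    assume "\<not> i < p"
    then have "a ! t = a' ! t" if "t < p" for t
      using that agree[of t] x_a[of t] by simp
    then have "a = a'"
      using assms(1,2) by (intro nth_equalityI) auto
    with assms(3) show False ..
  qed
  ultimately show ?thesis
    using ival_gap_at_first_difference[of i x x' p] ival_gap_at_first_difference[of i x' x p] x_p
    by (cases "x i") (auto simp: eq_commute)
qed

section \<open>Infinite concatenation and phase-shifted substitution\<close>

definition prepend :: "bool list \<Rightarrow> (nat \<Rightarrow> bool) \<Rightarrow> nat \<Rightarrow> bool" where
  "prepend w y n = (if n < length w then w ! n else y (n - length w))"

lemma prepend_Nil [simp]: "prepend [] y = y"
  by (simp add: prepend_def fun_eq_iff)

lemma prepend_append: "prepend (a @ b) y = prepend a (prepend b y)"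
  by (auto simp: prepend_def fun_eq_iff nth_append)

lemma iconcat_eq_nth:
  assumes "n < length (concat (map u [0..<m]))"
  shows "iconcat u n = concat (map u [0..<m]) ! n"
proof -
  let ?P = "\<lambda>m. n < length (concat (map u [0..<m]))"
  let ?m0 = "LEAST m. ?P m"
  have P0: "?P ?m0"
    using LeastI[of ?P, OF assms] .
  have "?m0 \<le> m"
    using Least_le[of ?P, OF assms] .
  then have "[0..<m] = [0..<?m0] @ [?m0..<m]"
    using upt_add_eq_append[of 0 ?m0 "m - ?m0"] by simp
  then have "concat (map u [0..<m]) = concat (map u [0..<?m0]) @ concat (map u [?m0..<m])"
    by simp
  then show ?thesis
    using assms P0 unfolding iconcat_def by (auto simp: nth_append)
qed

lemma iconcat_beyond:
  assumes "\<forall>m. \<not> n < length (concat (map u [0..<m]))"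
  shows "\<not> iconcat u n"
  using assms unfolding iconcat_def by simp

lemma concat_map_upt_Suc_0:
  "concat (map u [0..<Suc m]) = u 0 @ concat (map (\<lambda>i. u (Suc i)) [0..<m])"
  by (induction m) auto

lemma iconcat_eq_prepend_head: "iconcat u = prepend (u 0) (iconcat (\<lambda>i. u (Suc i)))"
proof
  fix n
  let ?v = "\<lambda>i. u (Suc i)" and ?n = "n - length (u 0)"
  show "iconcat u n = prepend (u 0) (iconcat ?v) n"
  proof (cases "n < length (u 0)")
    case True
    then have "iconcat u n = concat (map u [0..<1]) ! n"
      by (intro iconcat_eq_nth) auto
    with True show ?thesis
      by (simp add: prepend_def)
  next
    case False
    then have shift: "n < length (concat (map u [0..<Suc m])) \<longleftrightarrow>
        ?n < length (concat (map ?v [0..<m]))" for m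
      unfolding concat_map_upt_Suc_0 by (simp del: upt_Suc) linarith
    have "iconcat u n = iconcat ?v ?n"
    proof (cases "\<exists>m. ?n < length (concat (map ?v [0..<m]))")
      case True
      then obtain m where m: "?n < length (concat (map ?v [0..<m]))" ..
      have "iconcat u n = concat (map u [0..<Suc m]) ! n"
        using m shift by (intro iconcat_eq_nth) blast
      also have "\<dots> = concat (map ?v [0..<m]) ! ?n"
        unfolding concat_map_upt_Suc_0 using False by (simp add: nth_append del: upt_Suc)
      also have "\<dots> = iconcat ?v ?n"
        using m by (rule iconcat_eq_nth[symmetric])
      finally show ?thesis .
    next
      case no: False
      have "\<not> n < length (concat (map u [0..<m]))" for m
        using no shift False by (cases m) auto
      then show ?thesis
        using no iconcat_beyond by blast
    qed
    with False show ?thesis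
      by (simp add: prepend_def)
  qed
qed

lemma iconcat_eq_prepend:
  "iconcat u = prepend (concat (map u [0..<a])) (iconcat (\<lambda>i. u (i + a)))"
proof (induction a)
  case (Suc a)
  have "iconcat (\<lambda>i. u (i + a)) = prepend (u a) (iconcat (\<lambda>i. u (i + Suc a)))"
    using iconcat_eq_prepend_head[of "\<lambda>i. u (i + a)"] by simp
  with Suc show ?case
    by (simp add: prepend_append)
qed simp

lemma iconcat_all_Nil:
  assumes "\<And>j. u j = []"
  shows "iconcat u = (\<lambda>_. False)"
proof
  fix n
  have "\<forall>m. concat (map u [0..<m]) = []"
    using assms by simp
  then show "iconcat u n = False"
    using iconcat_beyond[of n u] by (metis length_0_conv less_zeroE)
qed

lemma concat_map_upt_blocks:
  "concat (map (\<lambda>i. concat (map u [i*k..<i*k+k])) [0..<m]) = concat (map u [0..<m*k])"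
proof (induction m)
  case (Suc m)
  have "[0..<Suc m * k] = [0..<m*k] @ [m*k..<m*k+k]"
    using upt_add_eq_append[of 0 "m*k" k] by (simp add: add.commute)
  with Suc show ?case
    by simp
qed simp

lemma length_concat_map_upt_mono:
  assumes "m \<le> m'"
  shows "length (concat (map u [0..<m])) \<le> length (concat (map u [0..<m']))"
proof -
  have "[0..<m'] = [0..<m] @ [m..<m']"
    using assms upt_add_eq_append[of 0 m "m' - m"] by simp
  then show ?thesis by simp
qed

lemma iconcat_blocks:
  assumes "k > 0"
  shows "iconcat u = iconcat (\<lambda>i. concat (map u [i*k..<i*k+k]))"
proof
  fix n
  let ?v = "\<lambda>i. concat (map u [i*k..<i*k+k])"
  show "iconcat u n = iconcat ?v n"
  proof (cases "\<exists>m. n < length (concat (map ?v [0..<m]))")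
    case True
    then obtain m where m: "n < length (concat (map ?v [0..<m]))" ..
    then show ?thesis
      using iconcat_eq_nth[OF m] iconcat_eq_nth[of n u "m*k"] by (simp add: concat_map_upt_blocks)
  next
    case False
    have "\<not> n < length (concat (map u [0..<m]))" for m
    proof -
      have "\<not> n < length (concat (map u [0..<m*k]))"
        using False by (simp add: concat_map_upt_blocks)
      moreover have "length (concat (map u [0..<m])) \<le> length (concat (map u [0..<m*k]))"
        using assms by (intro length_concat_map_upt_mono) simp
      ultimately show ?thesis by linarith
    qed
    then show ?thesis
      using False iconcat_beyond[of n u] iconcat_beyond[of n ?v] by blast
  qed
qed

text \<open>After a prefix whose length is not a multiple of k, the substitution continues at a
shifted phase r.\<close>

definition sub_at :: "(nat \<Rightarrow> bool \<Rightarrow> bool list) \<Rightarrow> nat \<Rightarrow> nat \<Rightarrow> bool list \<Rightarrow> bool list" where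
  "sub_at s k r w = concat (map (\<lambda>j. s ((j + r) mod k) (w ! j)) [0..<length w])"

definition isub_at :: "(nat \<Rightarrow> bool \<Rightarrow> bool list) \<Rightarrow> nat \<Rightarrow> nat \<Rightarrow> (nat \<Rightarrow> bool) \<Rightarrow> nat \<Rightarrow> bool" where
  "isub_at s k r y = iconcat (\<lambda>j. s ((j + r) mod k) (y j))"

lemma sub_eq_sub_at_0: "sub s k = sub_at s k 0"
  by (simp add: sub_def sub_at_def fun_eq_iff)

lemma isub_eq_isub_at_0: "isub s k = isub_at s k 0"
  by (simp add: isub_def isub_at_def fun_eq_iff)

lemma isub_at_mod_cong: "r mod k = r' mod k \<Longrightarrow> isub_at s k r = isub_at s k r'"
  unfolding isub_at_def by (simp add: mod_add_right_eq[symmetric, of _ r] mod_add_right_eq[symmetric, of _ r'])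

lemma isub_at_prepend:
  "isub_at s k r (prepend w y) = prepend (sub_at s k r w) (isub_at s k (r + length w) y)"
proof -
  have "concat (map (\<lambda>j. s ((j + r) mod k) (prepend w y j)) [0..<length w]) = sub_at s k r w"
    unfolding sub_at_def by (intro arg_cong[where f=concat] map_cong) (auto simp: prepend_def)
  moreover have "(\<lambda>i. s ((i + length w + r) mod k) (prepend w y (i + length w)))
      = (\<lambda>i. s ((i + (r + length w)) mod k) (y i))"
    by (simp add: prepend_def add.assoc add.commute[of r])
  ultimately show ?thesis
    unfolding isub_at_def by (subst iconcat_eq_prepend[where a = "length w"]) (simp add: add.assoc)
qed

lemma sub_Nil_funpow: "(sub s k ^^ j) [] = []"
  by (induction j) (simp_all add: sub_def)

lemma sub_funpow_Nil_mono:
  assumes "(sub s k ^^ e) w = []" "e \<le> n"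
  shows "(sub s k ^^ n) w = []"
proof -
  have "(sub s k ^^ n) w = (sub s k ^^ (n - e)) ((sub s k ^^ e) w)"
    using assms(2) funpow_add[of "n - e" e "sub s k"] by simp
  with assms(1) show ?thesis
    by (simp add: sub_Nil_funpow)
qed

section \<open>Eventually periodic words\<close>

definition eventually_periodic :: "(nat \<Rightarrow> bool) \<Rightarrow> bool" where
  "eventually_periodic x \<longleftrightarrow> (\<exists>N p. 0 < p \<and> (\<forall>n\<ge>N. x (n + p) = x n))"

lemma eventually_periodic_prepend_iff:
  "eventually_periodic (prepend w v) \<longleftrightarrow> eventually_periodic v"
proof
  assume "eventually_periodic (prepend w v)"
  then obtain N p where "0 < p" and per: "\<forall>n\<ge>N. prepend w v (n + p) = prepend w v n"
    unfolding eventually_periodic_def by blast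
  have "v (n + p) = v n" if "N \<le> n" for n
    using per[rule_format, of "n + length w"] that by (simp add: prepend_def add.commute add.left_commute)
  with \<open>0 < p\<close> show "eventually_periodic v"
    unfolding eventually_periodic_def by blast
next
  assume "eventually_periodic v"
  then obtain N p where "0 < p" and per: "\<forall>n\<ge>N. v (n + p) = v n"
    unfolding eventually_periodic_def by blast
  have "prepend w v (n + p) = prepend w v n" if "N + length w \<le> n" for n
    using per[rule_format, of "n - length w"] that by (simp add: prepend_def)
  with \<open>0 < p\<close> show "eventually_periodic (prepend w v)"
    unfolding eventually_periodic_def by blast
qed

lemma INFM_if_not_eventually_periodic:
  assumes "\<not> eventually_periodic x"
  shows "\<exists>\<^sub>\<infinity>n. x n"
  unfolding INFM_nat_le
proof
  fix N
  show "\<exists>n\<ge>N. x n"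
  proof (rule ccontr)
    assume "\<not> (\<exists>n\<ge>N. x n)"
    then have "\<forall>n\<ge>N. x (n + 1) = x n" by auto
    with assms show False
      unfolding eventually_periodic_def by blast
  qed
qed

lemma not_eventually_periodic_powers_of_two:
  "\<not> eventually_periodic (\<lambda>n. \<exists>m. n = 2 ^ m)"
proof
  assume "eventually_periodic (\<lambda>n. \<exists>m. n = (2::nat) ^ m)"
  then obtain N p where "0 < p" and per: "\<forall>n\<ge>N. (\<exists>m. n + p = (2::nat) ^ m) = (\<exists>m. n = 2 ^ m)"
    unfolding eventually_periodic_def by blast
  define m where "m = N + p"
  have "N + p < 2 ^ (N + p)" by (rule less_exp)
  then have m: "N \<le> 2 ^ m" "p < 2 ^ m"
    unfolding m_def by linarith+
  then obtain q where q: "2 ^ m + p = (2::nat) ^ q"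
    using per by blast
  then have "2 ^ m < (2::nat) ^ q"
    using \<open>0 < p\<close> by linarith
  then have "2 ^ Suc m \<le> (2::nat) ^ q"
    by (metis Suc_leI nat_power_less_imp_less power_increasing zero_less_numeral one_le_numeral)
  with q m show False by simp
qed

lemma periodic_add_mult:
  fixes y :: "nat \<Rightarrow> 'a"
  assumes "\<forall>n. y (n + p) = y n"
  shows "y (n + q * p) = y n"
proof (induction q)
  case (Suc q)
  then show ?case
    using assms[rule_format, of "n + q * p"] by (simp add: ac_simps)
qed simp

text \<open>Either one period produces output, which then repeats, or everything is erased.\<close>

lemma eventually_periodic_isub_at_periodic:
  assumes "0 < P" "k dvd P" "\<forall>n. y (n + P) = y n"
  shows "eventually_periodic (isub_at s k r y)"
proof -
  define Q where "Q = map y [0..<P]"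
  define A where "A = sub_at s k r Q"
  have y_Q: "y = prepend Q y"
  proof
    fix n
    show "y n = prepend Q y n"
      using assms(3)[rule_format, of "n - P"] by (cases "n < P") (simp_all add: prepend_def Q_def)
  qed
  have "isub_at s k (r + length Q) = isub_at s k r"
    using assms(2) by (intro isub_at_mod_cong) (auto simp: Q_def elim!: dvdE)
  then have V_A: "isub_at s k r y = prepend A (isub_at s k r y)"
    unfolding A_def by (subst y_Q) (simp only: isub_at_prepend)
  show ?thesis
  proof (cases "A = []")
    case False
    have "isub_at s k r y (n + length A) = isub_at s k r y n" for n
      by (subst (1) V_A) (simp add: prepend_def)
    with False show ?thesis
      unfolding eventually_periodic_def by (intro exI[of _ 0] exI[of _ "length A"]) simp
  next
    case True
    then have erased: "\<forall>j<P. s ((j + r) mod k) (y j) = []"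
      unfolding A_def sub_at_def Q_def by auto
    have "s ((j + r) mod k) (y j) = []" for j
    proof -
      have j: "j = j mod P + (j div P) * P" by simp
      have "y j = y (j mod P)"
        using periodic_add_mult[OF assms(3), of "j mod P" "j div P"] j by simp
      moreover have "(j + r) mod k = (j mod P + r) mod k"
        using assms(2) by (metis mod_add_left_eq mod_mod_cancel)
      ultimately show ?thesis
        using erased assms(1) by simp
    qed
    then have "isub_at s k r y = (\<lambda>_. False)"
      unfolding isub_at_def by (rule iconcat_all_Nil)
    then show ?thesis
      unfolding eventually_periodic_def by (intro exI[of _ 0] exI[of _ 1]) simp
  qed
qed

lemma eventually_periodic_isub_at:
  assumes "0 < k" "eventually_periodic y"
  shows "eventually_periodic (isub_at s k r y)"
proof -
  obtain N p where "0 < p" and per: "\<forall>n\<ge>N. y (n + p) = y n"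
    using assms(2) unfolding eventually_periodic_def by blast
  define y' where "y' n = y (n + N)" for n
  have y_y': "y = prepend (map y [0..<N]) y'"
    by (auto simp: fun_eq_iff prepend_def y'_def)
  have "y' (n + p) = y' n" for n
    using per[rule_format, of "n + N"] by (simp add: y'_def ac_simps)
  then have "\<forall>n. y' (n + k * p) = y' n"
    using periodic_add_mult[of y' p _ k] by blast
  then have "eventually_periodic (isub_at s k (r + N) y')"
    using assms(1) \<open>0 < p\<close> by (intro eventually_periodic_isub_at_periodic) simp_all
  then show ?thesis
    by (subst y_y') (simp add: isub_at_prepend eventually_periodic_prepend_iff)
qed

section \<open>Desubstitution and orbits with prescribed prefixes\<close>

lemma eblock_erased:
  assumes "erasing s k"
  shows "length (eblock s k) = k" "sub s k (eblock s k) = []"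
proof -
  have "length (eblock s k) = k \<and> sub s k (eblock s k) = []"
    unfolding eblock_def by (rule theI') (use assms in \<open>simp add: erasing_def\<close>)
  then show "length (eblock s k) = k" "sub s k (eblock s k) = []"
    by auto
qed

lemma eblock_letter_erased:
  assumes "erasing s k" "t < k"
  shows "s t (eblock s k ! t) = []"
proof -
  have "concat (map (\<lambda>j. s (j mod k) (eblock s k ! j)) [0..<k]) = []"
    using eblock_erased[OF assms(1)] unfolding sub_def by simp
  with assms(2) show ?thesis
    by simp
qed

lemma fsigma_ival:
  assumes "erasing s k" "0 < k" "\<exists>\<^sub>\<infinity>n. x n"
  shows "fsigma s k (ival x) = ival (isub s k x)"
proof (cases "x = (\<lambda>n. eblock s k ! (n mod k))")
  case True
  have "isub s k x = (\<lambda>_. False)"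
    unfolding isub_def True by (rule iconcat_all_Nil) (simp add: eblock_letter_erased assms(1,2))
  then show ?thesis
    using True unfolding fsigma_def tilde_ival[OF assms(3)] by (simp add: ival_def)
next
  case False
  then show ?thesis
    using ival_pos[OF assms(3)] ival_le_one[of x] by (simp add: fsigma_def tilde_ival[OF assms(3)])
qed

lemma funpow_fsigma_ival:
  assumes "erasing s k" "0 < k" "\<forall>j<i. \<exists>\<^sub>\<infinity>n. (isub s k ^^ j) x n"
  shows "(fsigma s k ^^ i) (ival x) = ival ((isub s k ^^ i) x)"
  using assms(3)
proof (induction i)
  case (Suc i)
  then show ?case
    using fsigma_ival[OF assms(1,2), of "(isub s k ^^ i) x"] by simp
qed simp

lemma isub_prepend: "isub s k (prepend w y) = prepend (sub s k w) (isub_at s k (length w) y)"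
  unfolding isub_eq_isub_at_0 sub_eq_sub_at_0 by (simp add: isub_at_prepend)

lemma optimal_imp_isub_surj:
  assumes "optimal s k" "0 < k"
  shows "\<exists>y. isub s k y = z"
proof -
  obtain b where b: "\<forall>i. length (b i) = k \<and> sub s k (b i) \<noteq> []"
    and z: "z = iconcat (\<lambda>i. sub s k (b i))"
    using assms(1) unfolding optimal_def by blast
  define y where "y n = b (n div k) ! (n mod k)" for n
  have "concat (map (\<lambda>j. s (j mod k) (y j)) [i*k..<i*k+k]) = sub s k (b i)" for i
  proof -
    have "concat (map (\<lambda>j. s (j mod k) (y j)) [i*k..<i*k+k])
        = concat (map (\<lambda>t. s ((t + i*k) mod k) (y (t + i*k))) [0..<k])"
      by (simp add: map_add_upt[symmetric] add.commute comp_def)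
    also have "\<dots> = sub s k (b i)"
      unfolding sub_def using b assms(2) by (intro arg_cong[where f=concat] map_cong) (auto simp: y_def)
    finally show ?thesis .
  qed
  then have "isub s k y = z"
    unfolding isub_def z by (subst iconcat_blocks[OF assms(2)]) simp
  then show ?thesis by blast
qed

lemma isub_at_prepend_eblock_suffix:
  assumes "erasing s k" "0 < k"
  shows "isub_at s k r (prepend (drop (r mod k) (eblock s k)) y) = isub s k y"
proof -
  let ?e = "eblock s k" and ?r = "r mod k"
  have len: "length (drop ?r ?e) = k - ?r"
    using eblock_erased(1)[OF assms(1)] by simp
  have "s ((j + r) mod k) (drop ?r ?e ! j) = []" if "j < k - ?r" for j
  proof -
    have "(j + r) mod k = j + ?r"
      using that by (metis mod_add_right_eq mod_less less_diff_conv)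
    moreover have "drop ?r ?e ! j = ?e ! (j + ?r)"
      using that eblock_erased(1)[OF assms(1)] by (simp add: add.commute)
    ultimately show ?thesis
      using eblock_letter_erased[OF assms(1), of "j + ?r"] that by simp
  qed
  then have "sub_at s k r (drop ?r ?e) = []"
    unfolding sub_at_def len by simp
  moreover have "r + (k - ?r) = (r div k + 1) * k"
    using div_mult_mod_eq[of r k] mod_less_divisor[OF assms(2), of r]
    by (simp only: distrib_right mult_1)
  then have "isub_at s k (r + (k - ?r)) = isub_at s k 0"
    by (intro isub_at_mod_cong) simp
  ultimately show ?thesis
    by (simp add: isub_at_prepend isub_eq_isub_at_0 eblock_erased(1)[OF assms(1)])
qed

lemma isub_at_preimage_not_eventually_periodic:
  assumes "erasing s k" "0 < k" "optimal s k" "\<not> eventually_periodic z"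
  obtains y where "isub_at s k r y = z" "\<not> eventually_periodic y"
proof -
  obtain y0 where y0: "isub s k y0 = z"
    using optimal_imp_isub_surj[OF assms(3,2)] by blast
  let ?y = "prepend (drop (r mod k) (eblock s k)) y0"
  have "isub_at s k r ?y = z"
    using isub_at_prepend_eblock_suffix[OF assms(1,2)] y0 by simp
  moreover from this have "\<not> eventually_periodic ?y"
    using eventually_periodic_isub_at[OF assms(2)] assms(4) by blast
  ultimately show ?thesis
    using that by blast
qed

lemma vanishing_prefix_orbit:
  assumes "erasing s k" "0 < k" "optimal s k"
    and "(sub s k ^^ m) w = []" "\<not> eventually_periodic z"
  shows "\<exists>y. (isub s k ^^ m) (prepend w y) = z \<and>
    (\<forall>i\<le>m. \<not> eventually_periodic ((isub s k ^^ i) (prepend w y)))"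
  using assms(4,5)
proof (induction m arbitrary: w z)
  case 0
  then show ?case
    by (intro exI[of _ z]) (simp add: eventually_periodic_prepend_iff)
next
  case (Suc m)
  have "(sub s k ^^ m) (sub s k w) = []"
    using Suc.prems(1) by (simp add: funpow_Suc_right del: funpow.simps)
  then obtain y' where y': "(isub s k ^^ m) (prepend (sub s k w) y') = z"
      "\<forall>i\<le>m. \<not> eventually_periodic ((isub s k ^^ i) (prepend (sub s k w) y'))"
    using Suc.IH Suc.prems(2) by blast
  then have "\<not> eventually_periodic y'"
    by (auto simp: eventually_periodic_prepend_iff)
  then obtain y where y: "isub_at s k (length w) y = y'" "\<not> eventually_periodic y"
    by (rule isub_at_preimage_not_eventually_periodic[OF assms(1-3)])
  have step: "(isub s k ^^ Suc i) (prepend w y) = (isub s k ^^ i) (prepend (sub s k w) y')" for i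
    using y(1) by (simp add: funpow_Suc_right isub_prepend del: funpow.simps)
  have "\<not> eventually_periodic ((isub s k ^^ i) (prepend w y))" if "i \<le> Suc m" for i
    using that y'(2) y(2) step by (cases i) (auto simp: eventually_periodic_prepend_iff)
  then show ?case
    using y'(1) step by blast
qed

lemma orbit_with_prescribed_prefixes:
  assumes "erasing s k" "0 < k" "optimal s k" "\<forall>w\<in>set ws. (sub s k ^^ m) w = []"
  shows "\<exists>x. (\<forall>i\<le>m * length ws. \<not> eventually_periodic ((isub s k ^^ i) x)) \<and>
    (\<forall>j<length ws. \<forall>t<length (ws ! j). (isub s k ^^ (j * m)) x t = ws ! j ! t)"
  using assms(4)
proof (induction ws)
  case Nil
  show ?case
    using not_eventually_periodic_powers_of_two by (intro exI[of _ "\<lambda>n. \<exists>m. n = 2 ^ m"]) auto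
next
  case (Cons w ws)
  then obtain x' where x': "\<forall>i\<le>m * length ws. \<not> eventually_periodic ((isub s k ^^ i) x')"
    "\<forall>j<length ws. \<forall>t<length (ws ! j). (isub s k ^^ (j * m)) x' t = ws ! j ! t"
    by auto
  moreover have "\<not> eventually_periodic x'"
    using x'(1) by auto
  ultimately obtain y where y: "(isub s k ^^ m) (prepend w y) = x'"
      "\<forall>i\<le>m. \<not> eventually_periodic ((isub s k ^^ i) (prepend w y))"
    using vanishing_prefix_orbit[OF assms(1-3)] Cons.prems by (metis list.set_intros(1))
  define x where "x = prepend w y"
  have shift: "(isub s k ^^ (i + m)) x = (isub s k ^^ i) x'" for i
    using y(1) by (simp add: funpow_add x_def)
  have "\<not> eventually_periodic ((isub s k ^^ i) x)" if "i \<le> m * length (w # ws)" for i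
  proof (cases "i \<le> m")
    case True
    then show ?thesis using y(2) by (simp add: x_def)
  next
    case False
    then have "i = (i - m) + m" "i - m \<le> m * length ws"
      using that by simp_all
    then show ?thesis
      using x'(1) shift by metis
  qed
  moreover have "(isub s k ^^ (j * m)) x t = (w # ws) ! j ! t"
    if "j < length (w # ws)" "t < length ((w # ws) ! j)" for j t
  proof (cases j)
    case 0
    then show ?thesis
      using that by (simp add: x_def prepend_def)
  next
    case (Suc j')
    then have "(isub s k ^^ (j * m)) x = (isub s k ^^ (j' * m)) x'"
      using shift[of "j' * m"] by (simp add: add.commute)
    then show ?thesis
      using x'(2) that Suc by simp
  qed
  ultimately show ?case
    by blast
qed

section \<open>Separated sets and entropy\<close>

lemma funpow_in_unit_interval:
  fixes f :: "real \<Rightarrow> real"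
  assumes "\<forall>x. f x \<in> {0..1}" "x \<in> {0..1}"
  shows "(f ^^ i) x \<in> {0..1}"
  using assms by (cases i) simp_all

lemma dn_ge:
  assumes "i \<le> n"
  shows "\<bar>(f ^^ i) x - (f ^^ i) y\<bar> \<le> dn f n x y"
  unfolding dn_def using assms by (intro Max_ge) auto

lemma dn_self: "dn f n x x = 0"
  unfolding dn_def by (simp add: image_constant_conv)

text \<open>Points of a separated set have pairwise different itineraries through the cells of
length \<delta> of the unit interval.\<close>

lemma bdd_above_card_separated:
  assumes "\<forall>x. f x \<in> {0..1}" "0 < \<delta>"
  shows "bdd_above {card S | S. finite S \<and> separated f n \<delta> S}"
proof -
  define K where "K = nat \<lfloor>1 / \<delta>\<rfloor>"
  define L where "L = {cs. set cs \<subseteq> {0..K} \<and> length cs = Suc n}"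
  define cells where "cells x = map (\<lambda>i. nat \<lfloor>(f ^^ i) x / \<delta>\<rfloor>) [0..<Suc n]" for x
  have "card S \<le> card L" if S: "finite S" "separated f n \<delta> S" for S
  proof -
    have unit: "0 \<le> (f ^^ i) x" "(f ^^ i) x \<le> 1" if "x \<in> S" for x i
      using funpow_in_unit_interval[OF assms(1), of x i] S(2) that unfolding separated_def by auto
    have "cells ` S \<subseteq> L"
    proof
      fix c
      assume "c \<in> cells ` S"
      then obtain x where x: "x \<in> S" "c = cells x" ..
      have "nat \<lfloor>(f ^^ i) x / \<delta>\<rfloor> \<le> K" for i
        unfolding K_def using unit(2)[OF x(1), of i] assms(2)
        by (intro nat_mono floor_mono divide_right_mono) simp_all
      then show "c \<in> L"
        unfolding L_def x(2) cells_def by auto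
    qed
    moreover have "inj_on cells S"
    proof (rule inj_onI, rule ccontr)
      fix x y
      assume xy: "x \<in> S" "y \<in> S" "cells x = cells y" "x \<noteq> y"
      have "\<bar>(f ^^ i) x - (f ^^ i) y\<bar> < \<delta>" if "i \<le> n" for i
      proof -
        have "cells x ! i = cells y ! i"
          using xy(3) by simp
        then have "nat \<lfloor>(f ^^ i) x / \<delta>\<rfloor> = nat \<lfloor>(f ^^ i) y / \<delta>\<rfloor>"
          using that by (simp add: cells_def nth_map_upt del: upt_Suc)
        then have "\<lfloor>(f ^^ i) x / \<delta>\<rfloor> = \<lfloor>(f ^^ i) y / \<delta>\<rfloor>"
          using unit(1)[OF xy(1), of i] unit(1)[OF xy(2), of i] assms(2) by (subst (asm) eq_nat_nat_iff) auto
        then have "\<bar>(f ^^ i) x / \<delta> - (f ^^ i) y / \<delta>\<bar> < 1"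
          by linarith
        then show ?thesis
          using assms(2) by (simp add: diff_divide_distrib[symmetric] divide_less_eq)
      qed
      then have "dn f n x y < \<delta>"
        unfolding dn_def by (subst Max_less_iff) auto
      moreover have "\<delta> \<le> dn f n x y"
        using S(2) xy unfolding separated_def by blast
      ultimately show False
        by simp
    qed
    moreover have "finite L"
      unfolding L_def by (rule finite_lists_length_eq) simp
    ultimately show ?thesis
      using card_image card_mono by metis
  qed
  then show ?thesis
    unfolding bdd_above_def by blast
qed

lemma card_le_sep_num:
  assumes "\<forall>x. f x \<in> {0..1}" "0 < \<delta>" "finite S" "separated f n \<delta> S"
  shows "card S \<le> sep_num f n \<delta>"
  unfolding sep_num_def by (rule cSup_upper) (use assms bdd_above_card_separated in auto)

lemma fsigma_in_unit_interval: "\<forall>x. fsigma s k x \<in> {0..1}"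
  by (simp add: fsigma_def ival_nonneg ival_le_one)

lemma fsigma_orbit_with_prescribed_prefixes:
  assumes "erasing s k" "0 < k" "optimal s k"
    and "\<forall>w. length w = Suc p \<longrightarrow> (sub s k ^^ m) w = []"
    and "length as = r" "\<forall>a\<in>set as. length a = p"
  obtains x where "\<forall>i\<le>r * m. (fsigma s k ^^ i) (ival x) = ival ((isub s k ^^ i) x)"
    and "\<forall>j<r. \<forall>t<Suc p. (isub s k ^^ (j * m)) x t = (as ! j @ [False]) ! t"
proof -
  let ?ws = "map (\<lambda>a. a @ [False]) as"
  have "\<forall>w\<in>set ?ws. (sub s k ^^ m) w = []"
    using assms(4,6) by auto
  then obtain x where x: "\<forall>i\<le>m * length ?ws. \<not> eventually_periodic ((isub s k ^^ i) x)"
      "\<forall>j<length ?ws. \<forall>t<length (?ws ! j). (isub s k ^^ (j * m)) x t = ?ws ! j ! t"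
    using orbit_with_prescribed_prefixes[OF assms(1-3)] by blast
  have "(fsigma s k ^^ i) (ival x) = ival ((isub s k ^^ i) x)" if "i \<le> r * m" for i
  proof (rule funpow_fsigma_ival[OF assms(1,2)])
    show "\<forall>j<i. \<exists>\<^sub>\<infinity>n. (isub s k ^^ j) x n"
      using that x(1) assms(5) INFM_if_not_eventually_periodic by (simp add: mult.commute)
  qed
  moreover have "(isub s k ^^ (j * m)) x t = (as ! j @ [False]) ! t" if "j < r" "t < Suc p" for j t
  proof -
    have "length (as ! j) = p"
      using that(1) assms(5,6) by simp
    then show ?thesis
      using x(2) that assms(5) by simp
  qed
  ultimately show ?thesis
    using that by blast
qed

text \<open>The 2^(p r) choices of r words of length p give orbit points whose expansions, at the
times 0, m, ..., (r - 1) m, begin with the chosen word followed by a zero.\<close>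

lemma sep_num_fsigma_ge:
  assumes "erasing s k" "0 < k" "optimal s k" "0 < \<delta>" "\<delta> \<le> 1 / 2 ^ Suc p"
    and "\<forall>w. length w = Suc p \<longrightarrow> (sub s k ^^ m) w = []"
  shows "2 ^ (p * r) \<le> sep_num (fsigma s k) (r * m) \<delta>"
proof -
  let ?f = "fsigma s k" and ?T = "isub s k"
  define A where "A = {a :: bool list. length a = p}"
  define Ws where "Ws = {as. set as \<subseteq> A \<and> length as = r}"
  define good where "good as x \<longleftrightarrow>
      (\<forall>i\<le>r * m. (?f ^^ i) (ival x) = ival ((?T ^^ i) x)) \<and>
      (\<forall>j<r. \<forall>t<Suc p. (?T ^^ (j * m)) x t = (as ! j @ [False]) ! t)" for as x
  define X where "X as = (SOME x. good as x)" for as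
  have good_X: "good as (X as)" if "as \<in> Ws" for as
  proof -
    have "length as = r" "\<forall>a\<in>set as. length a = p"
      using that by (auto simp: Ws_def A_def)
    then obtain x where "good as x"
      unfolding good_def by (rule fsigma_orbit_with_prescribed_prefixes[OF assms(1-3,6)]) blast
    then show ?thesis
      unfolding X_def by (rule someI[of "good as"])
  qed
  have far: "\<delta> \<le> dn ?f (r * m) (ival (X as)) (ival (X as'))"
    if mem: "as \<in> Ws" "as' \<in> Ws" and "as \<noteq> as'" for as as'
  proof -
    have "\<exists>j<r. as ! j \<noteq> as' ! j"
    proof (rule ccontr)
      assume "\<not> (\<exists>j<r. as ! j \<noteq> as' ! j)"
      then have "as = as'"
        using mem by (intro nth_equalityI) (auto simp: Ws_def)
      with \<open>as \<noteq> as'\<close> show False ..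
    qed
    then obtain j where j: "j < r" "as ! j \<noteq> as' ! j"
      by blast
    then have "as ! j \<in> set as" "as' ! j \<in> set as'"
      using mem by (simp_all add: Ws_def)
    then have len: "length (as ! j) = p" "length (as' ! j) = p"
      using mem by (auto simp: Ws_def A_def)
    have jm: "j * m \<le> r * m"
      using j(1) by simp
    have orbit: "(?f ^^ (j * m)) (ival (X bs)) = ival ((?T ^^ (j * m)) (X bs))"
      and prefix: "\<forall>t<Suc p. (?T ^^ (j * m)) (X bs) t = (bs ! j @ [False]) ! t"
      if "bs \<in> Ws" for bs
      using good_X[OF that] j(1) jm unfolding good_def by blast+
    have "1 / 2 ^ Suc p \<le> \<bar>ival ((?T ^^ (j * m)) (X as)) - ival ((?T ^^ (j * m)) (X as'))\<bar>"
      by (rule ival_separated_by_prefix[OF len j(2) prefix[OF mem(1)] prefix[OF mem(2)]])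
    also have "\<dots> = \<bar>(?f ^^ (j * m)) (ival (X as)) - (?f ^^ (j * m)) (ival (X as'))\<bar>"
      by (simp only: orbit[OF mem(1)] orbit[OF mem(2)])
    also have "\<dots> \<le> dn ?f (r * m) (ival (X as)) (ival (X as'))"
      by (rule dn_ge[OF jm])
    finally show ?thesis
      using assms(5) by linarith
  qed
  have inj: "inj_on (\<lambda>as. ival (X as)) Ws"
  proof (rule inj_onI, rule ccontr)
    fix as as'
    assume "as \<in> Ws" "as' \<in> Ws" "ival (X as) = ival (X as')" "as \<noteq> as'"
    then have "\<delta> \<le> 0"
      using far[of as as'] by (simp add: dn_self)
    with assms(4) show False
      by simp
  qed
  have "finite A" "card A = 2 ^ p"
    using finite_lists_length_eq[of "UNIV :: bool set" p] card_lists_length_eq[of "UNIV :: bool set" p]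
    by (simp_all add: A_def)
  then have "finite Ws" "card Ws = 2 ^ (p * r)"
    using finite_lists_length_eq[of A r] card_lists_length_eq[of A r]
    by (simp_all add: Ws_def power_mult)
  moreover have "separated ?f (r * m) \<delta> ((\<lambda>as. ival (X as)) ` Ws)"
    unfolding separated_def
  proof (intro conjI ballI impI)
    show "(\<lambda>as. ival (X as)) ` Ws \<subseteq> {0..1}"
      using ival_nonneg ival_le_one by auto
    fix x y
    assume "x \<in> (\<lambda>as. ival (X as)) ` Ws" "y \<in> (\<lambda>as. ival (X as)) ` Ws" "x \<noteq> y"
    then obtain as as' where "as \<in> Ws" "as' \<in> Ws" "x = ival (X as)" "y = ival (X as')"
      by blast
    with far \<open>x \<noteq> y\<close> show "\<delta> \<le> dn ?f (r * m) x y"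
      by blast
  qed
  ultimately have "card ((\<lambda>as. ival (X as)) ` Ws) \<le> sep_num ?f (r * m) \<delta>"
    by (intro card_le_sep_num[OF fsigma_in_unit_interval assms(4)]) simp_all
  then show ?thesis
    using card_image[OF inj] \<open>card Ws = 2 ^ (p * r)\<close> by simp
qed

definition sep_growth :: "(real \<Rightarrow> real) \<Rightarrow> real \<Rightarrow> ereal" where
  "sep_growth f \<delta> = limsup (\<lambda>n. ereal (ln (real (sep_num f n \<delta>)) / real n))"

lemma sep_growth_ge:
  assumes "0 < m" "\<forall>r. 2 ^ (p * Suc r) \<le> sep_num f (Suc r * m) \<delta>"
  shows "ereal (p * ln 2 / m) \<le> sep_growth f \<delta>"
proof -
  define X where "X n = ereal (ln (real (sep_num f n \<delta>)) / real n)" for n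
  have "ereal (p * ln 2 / m) \<le> X (Suc r * m)" for r
  proof -
    have le: "real (2 ^ (p * Suc r)) \<le> real (sep_num f (Suc r * m) \<delta>)"
      using assms(2) by (simp only: of_nat_le_iff)
    have pos: "0 < real (2 ^ (p * Suc r))"
      by simp
    with le have "ln (real (2 ^ (p * Suc r))) \<le> ln (real (sep_num f (Suc r * m) \<delta>))"
      by (subst ln_le_cancel_iff) (use pos in linarith)+
    then have "real (p * Suc r) * ln 2 \<le> ln (real (sep_num f (Suc r * m) \<delta>))"
      by (simp add: ln_realpow)
    then have "real (p * Suc r) * ln 2 / real (Suc r * m) \<le> ln (real (sep_num f (Suc r * m) \<delta>)) / real (Suc r * m)"
      by (simp add: divide_right_mono)
    moreover have "real (p * Suc r) * ln 2 / real (Suc r * m) = (real (Suc r) * (p * ln 2)) / (real (Suc r) * m)"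
      by (simp only: of_nat_mult ac_simps)
    moreover have "\<dots> = p * ln 2 / m"
      by (rule mult_divide_mult_cancel_left) simp
    ultimately show ?thesis
      unfolding X_def by simp
  qed
  then have "ereal (p * ln 2 / m) \<le> limsup (X \<circ> (\<lambda>r. Suc r * m))"
    by (intro le_Limsup) (simp_all add: o_def)
  also have "\<dots> \<le> limsup X"
    by (rule limsup_subseq_mono) (use assms(1) in \<open>simp add: strict_mono_def\<close>)
  finally show ?thesis
    unfolding X_def sep_growth_def .
qed

lemma htop_eq_PInf:
  assumes "\<And>B. \<forall>\<^sub>F \<delta> in at_right 0. ereal B \<le> sep_growth f \<delta>"
  shows "htop f = \<infinity>"
proof -
  have "(sep_growth f \<longlongrightarrow> \<infinity>) (at_right 0)"
    unfolding tendsto_PInfty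
  proof
    fix B
    show "\<forall>\<^sub>F \<delta> in at_right 0. ereal B < sep_growth f \<delta>"
      using assms[of "B + 1"] by eventually_elim (rule less_le_trans[of _ "ereal (B + 1)"], simp_all)
  qed
  then show ?thesis
    unfolding htop_def sep_growth_def[abs_def] by (intro tendsto_Lim) simp_all
qed

section \<open>Uniform vanishing time and the main theorem\<close>

lemma sub_funpow_vanishing_order:
  assumes "completely_erasing s k"
  shows "(sub s k ^^ vanishing_order s k w) w = []"
  unfolding vanishing_order_def
  by (rule LeastI_ex) (use assms in \<open>simp add: completely_erasing_def\<close>)

text \<open>M = 3 (|C| + 1) absorbs the rounding in m = \<lceil>(p + 1) / M\<rceil>.\<close>

lemma uniform_vanishing_time:
  assumes "completely_erasing s k"
    and "\<forall>M>0. \<exists>N. \<forall>w. length w > N \<longrightarrow> real (length w) / real (vanishing_order s k w) > M"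
  obtains p m where "0 < m" "C * real m \<le> real p"
    and "\<forall>w. length w = Suc p \<longrightarrow> (sub s k ^^ m) w = []"
proof -
  define M where "M = 3 * (\<bar>C\<bar> + 1)"
  have "0 < M"
    unfolding M_def by simp
  then obtain N where N: "\<forall>w. length w > N \<longrightarrow> real (length w) / real (vanishing_order s k w) > M"
    using assms(2) by blast
  define p where "p = N + nat \<lceil>M\<rceil> + 1"
  have "N < Suc p" "M \<le> real p" "1 \<le> real p"
    unfolding p_def by linarith+
  define m where "m = nat \<lceil>real (Suc p) / M\<rceil>"
  have "0 < m"
    unfolding m_def using \<open>0 < M\<close> by simp
  have "(sub s k ^^ m) w = []" if "length w = Suc p" for w
  proof (rule sub_funpow_Nil_mono[OF sub_funpow_vanishing_order[OF assms(1)]])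
    let ?e = "vanishing_order s k w"
    have "M < real (Suc p) / real ?e"
      using N[rule_format, of w] \<open>N < Suc p\<close> that by simp
    moreover have "0 < ?e"
    proof (rule ccontr)
      assume "\<not> 0 < ?e"
      with \<open>M < real (Suc p) / real ?e\<close> \<open>0 < M\<close> show False
        by simp
    qed
    ultimately have "M * real ?e < real (Suc p)"
      by (simp add: pos_less_divide_eq)
    then have "real ?e < real (Suc p) / M"
      using \<open>0 < M\<close> by (simp add: pos_less_divide_eq mult.commute)
    then show "?e \<le> m"
      unfolding m_def by linarith
  qed
  moreover have "C * real m \<le> real p"
  proof -
    have "real m \<le> real (Suc p) / M + 1"
      unfolding m_def using \<open>0 < M\<close> by (simp add: of_nat_nat)
    also have "\<dots> = (real (Suc p) + M) / M"
      using \<open>0 < M\<close> by (simp add: add_divide_distrib)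
    also have "\<dots> \<le> 3 * real p / M"
      using \<open>0 < M\<close> \<open>M \<le> real p\<close> \<open>1 \<le> real p\<close> by (intro divide_right_mono) linarith+
    finally have "(\<bar>C\<bar> + 1) * real m \<le> real p"
      using \<open>0 < M\<close> unfolding M_def by (simp add: field_simps)
    moreover have "C * real m \<le> (\<bar>C\<bar> + 1) * real m"
      by (intro mult_right_mono) auto
    ultimately show ?thesis
      by linarith
  qed
  ultimately show ?thesis
    using that \<open>0 < m\<close> by blast
qed

theorem mainTheorem18:
  fixes s :: "nat \<Rightarrow> bool \<Rightarrow> bool list" and k :: nat
  assumes "k \<ge> 2"
    and "completely_erasing s k"
    and "eblock s k \<noteq> replicate k True"
    and "optimal s k"
    and "\<forall>M>0. \<exists>N. \<forall>w. length w > N \<longrightarrow>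
           real (length w) / real (vanishing_order s k w) > M"
  shows "htop (fsigma s k) = \<infinity>"
proof (rule htop_eq_PInf)
  fix B :: real
  have erasing: "erasing s k" and "0 < k"
    using assms(1,2) by (simp_all add: completely_erasing_def)
  obtain p m where "0 < m" "B / ln 2 * real m \<le> real p"
    and vanish: "\<forall>w. length w = Suc p \<longrightarrow> (sub s k ^^ m) w = []"
    by (rule uniform_vanishing_time[OF assms(2,5)])
  then have "B \<le> p * ln 2 / m"
    by (simp add: field_simps)
  have "\<forall>\<^sub>F \<delta> in at_right 0. \<delta> \<in> {0<..<1 / (2::real) ^ Suc p}"
    by (rule eventually_at_right_real) simp
  then show "\<forall>\<^sub>F \<delta> in at_right 0. ereal B \<le> sep_growth (fsigma s k) \<delta>"
  proof eventually_elim
    case (elim \<delta>)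
    then have "2 ^ (p * Suc r) \<le> sep_num (fsigma s k) (Suc r * m) \<delta>" for r
      by (intro sep_num_fsigma_ge[OF erasing \<open>0 < k\<close> assms(4) _ _ vanish]) simp_all
    then have "ereal (p * ln 2 / m) \<le> sep_growth (fsigma s k) \<delta>"
      by (intro sep_growth_ge[OF \<open>0 < m\<close>]) blast
    with \<open>B \<le> p * ln 2 / m\<close> show ?case
      by (meson ereal_less_eq(3) order_trans)
  qed
qed

end
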